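(* Let $\bm{w},\bm{v}$ be two unit vectors in $\mathbb{R}^d$ and $\bm{U}$ a linear subspace of $\mathbb{R}^d$, and assume that $\bm{w}$ and $\bm{v}$ do not both lie in $\bm{U}$. Then $\sin\theta(\mathrm{span}(\bm{U},\bm{w}),\mathrm{span}(\bm{U},\bm{v}))\le\frac{\sin\theta(\bm{w},\bm{v})}{\max\{\sin\theta(\bm{w},\bm{U}),\sin\theta(\bm{v},\bm{U})\}}$.
   Context: $\theta(\bm{x},\bm{y})$ is the angle between nonzero vectors; for a vector $\bm{x}$ and subspace $\bm{U}$, $\theta(\bm{x},\bm{U})=\min_{\bm{u}\in\bm{U}}\theta(\bm{x},\bm{u})$; for subspaces $\bm{U},\bm{V}$, $\theta(\bm{U},\bm{V})=\max_{\bm{u}\in\bm{U}}\theta(\bm{u},\bm{V})$. *)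

theory Defs
  imports "HOL-Analysis.Analysis"
begin

definition vec_angle :: "'a::real_inner \<Rightarrow> 'a \<Rightarrow> real" where
  "vec_angle x y = arccos ((x \<bullet> y) / (norm x * norm y))"

definition angle_vec_sub :: "'a::euclidean_space \<Rightarrow> 'a set \<Rightarrow> real" where
  "angle_vec_sub x U = (if U \<subseteq> {0} then pi / 2 else (INF u\<in>U - {0}. vec_angle x u))"

definition angle_sub_sub :: "'a::euclidean_space set \<Rightarrow> 'a set \<Rightarrow> real" where
  "angle_sub_sub U V = (if U \<subseteq> {0} then 0 else (SUP u\<in>U - {0}. angle_vec_sub u V))"

end

theory Submission
  imports Defs
begin

(* Split w = yw + zw and v = yv + zv along U and its orthogonal complement, so that
   sin \<theta>(w, U) = |zw| and sin \<theta>(v, U) = |zv|, and let r be the rejection of zw from zv.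
   Every a = u + t w in span(U, w) splits as (a - t r) + t r with a - t r in span(U, v) and
   t r orthogonal to span(U, v); since |a| \<ge> |t| |zw|, this gives
   sin \<theta>(a, span(U, v)) \<le> |r| / |zw|.  Dropping the U-components can only shorten a
   rejection, so |r| \<le> sin \<theta>(w, v), and likewise for the rejection r' of zv from zw.  As
   |r| |zv| = |r'| |zw| (the area of the parallelogram spanned by zw and zv), also
   |r| / |zw| \<le> sin \<theta>(w, v) / |zv|. *)

(* Vector rejection of a from b; rejection a 0 = a, as x / 0 = 0. *)
definition rejection :: "'a::real_inner \<Rightarrow> 'a \<Rightarrow> 'a" where
  "rejection a b = a - ((a \<bullet> b) / (b \<bullet> b)) *\<^sub>R b"

lemma rejection_zero_left [simp]: "rejection 0 b = 0"
  by (simp add: rejection_def)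

lemma orthogonal_rejection: "orthogonal (rejection a b) b"
  by (cases "b = 0") (simp_all add: rejection_def orthogonal_def inner_diff_left)

lemma norm_diff_scaleR_sq:
  fixes a b :: "'a::real_inner"
  shows "(norm (a - t *\<^sub>R b))\<^sup>2 = a \<bullet> a - 2 * t * (a \<bullet> b) + t\<^sup>2 * (b \<bullet> b)"
  unfolding power2_norm_eq_inner
  by (simp add: inner_diff_left inner_diff_right inner_commute power2_eq_square algebra_simps)

lemma norm_rejection_le: "norm (rejection a b) \<le> norm (a - t *\<^sub>R b)"
proof -
  define \<alpha> where "\<alpha> = (a \<bullet> b) / (b \<bullet> b)"
  have "a - t *\<^sub>R b = rejection a b + (\<alpha> - t) *\<^sub>R b"
    by (simp add: rejection_def \<alpha>_def algebra_simps)
  then have "(norm (a - t *\<^sub>R b))\<^sup>2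
               = (norm (rejection a b))\<^sup>2 + (norm ((\<alpha> - t) *\<^sub>R b))\<^sup>2"
    using norm_add_Pythagorean orthogonal_rejection orthogonal_clauses(2) by metis
  then show ?thesis
    by (metis abs_norm_cancel le_add_same_cancel1 real_le_rsqrt real_sqrt_abs zero_le_power2)
qed

lemma norm_rejection_sq_mult:
  "(norm (rejection a b))\<^sup>2 * (b \<bullet> b) = (a \<bullet> a) * (b \<bullet> b) - (a \<bullet> b)\<^sup>2"
  unfolding rejection_def norm_diff_scaleR_sq
  by (cases "b = 0") (simp_all add: field_simps power2_eq_square)

lemma norm_rejection_mult_norm_commute:
  "norm (rejection a b) * norm b = norm (rejection b a) * norm a"
proof -
  have "(norm (rejection a b) * norm b)\<^sup>2 = (norm (rejection b a) * norm a)\<^sup>2"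
    using norm_rejection_sq_mult[of a b] norm_rejection_sq_mult[of b a]
    by (simp add: power_mult_distrib power2_norm_eq_inner inner_commute mult.commute)
  then show ?thesis
    by (simp add: power2_eq_iff_nonneg)
qed

lemma norm_rejection_eq_sin_vec_angle:
  assumes "b \<noteq> 0"
  shows "norm (rejection a b) = norm a * sin (vec_angle a b)"
proof (cases "a = 0")
  case True
  then show ?thesis by simp
next
  case False
  define c where "c = (a \<bullet> b) / (norm a * norm b)"
  have nab: "norm a * norm b > 0" using False assms by simp
  have "\<bar>a \<bullet> b\<bar> \<le> norm a * norm b" by (rule Cauchy_Schwarz_ineq2)
  then have c1: "\<bar>c\<bar> \<le> 1" using nab unfolding c_def abs_divide by (simp add: divide_le_eq_1)
  have ab: "a \<bullet> b = c * (norm a * norm b)" using nab unfolding c_def by simp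
  have "(norm (rejection a b))\<^sup>2 * (norm b)\<^sup>2 = (norm a)\<^sup>2 * (norm b)\<^sup>2 - (a \<bullet> b)\<^sup>2"
    using norm_rejection_sq_mult[of a b] by (simp only: power2_norm_eq_inner)
  also have "\<dots> = (norm a * sqrt (1 - c\<^sup>2))\<^sup>2 * (norm b)\<^sup>2"
    using c1 unfolding ab by (simp add: power_mult_distrib abs_square_le_1 algebra_simps)
  finally have "(norm (rejection a b))\<^sup>2 = (norm a * sqrt (1 - c\<^sup>2))\<^sup>2"
    using assms by simp
  then have "norm (rejection a b) = norm a * sqrt (1 - c\<^sup>2)"
    using c1 by (simp add: power2_eq_iff_nonneg abs_square_le_1)
  then show ?thesis
    using c1 unfolding vec_angle_def c_def[symmetric] by (simp add: sin_arccos_abs)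
qed

lemma vec_angle_commute: "vec_angle a b = vec_angle b a"
  by (simp add: vec_angle_def inner_commute mult.commute)

lemma norm_le_norm_add_orthogonal:
  assumes "orthogonal y z"
  shows "norm z \<le> norm (y + z)"
  using norm_add_Pythagorean[OF assms]
  by (metis abs_norm_cancel le_add_same_cancel2 real_le_rsqrt real_sqrt_abs zero_le_power2)

lemma norm_rejection_orthogonal_comp_le:
  fixes ya yb za zb :: "'a::euclidean_space"
  assumes "ya \<in> U" "yb \<in> U" "za \<in> U\<^sup>\<bottom>" "zb \<in> U\<^sup>\<bottom>"
  shows "norm (rejection za zb) \<le> norm (rejection (ya + za) (yb + zb))"
proof -
  define \<beta> where "\<beta> = ((ya + za) \<bullet> (yb + zb)) / ((yb + zb) \<bullet> (yb + zb))"
  have "orthogonal (ya - \<beta> *\<^sub>R yb) (za - \<beta> *\<^sub>R zb)"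
    using assms by (simp add: orthogonal_comp_def orthogonal_clauses)
  then have "norm (za - \<beta> *\<^sub>R zb) \<le> norm ((ya - \<beta> *\<^sub>R yb) + (za - \<beta> *\<^sub>R zb))"
    by (rule norm_le_norm_add_orthogonal)
  also have "(ya - \<beta> *\<^sub>R yb) + (za - \<beta> *\<^sub>R zb) = rejection (ya + za) (yb + zb)"
    by (simp add: rejection_def \<beta>_def algebra_simps)
  finally show ?thesis
    using norm_rejection_le order_trans by blast
qed

lemma angle_vec_sub_eq_arccos:
  fixes x y z :: "'a::euclidean_space"
  assumes "x \<noteq> 0" "y \<in> S" "z \<in> S\<^sup>\<bottom>" "x = y + z"
  shows "angle_vec_sub x S = arccos (norm y / norm x)"
proof -
  have inner_x: "x \<bullet> u = y \<bullet> u" if "u \<in> S" for u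
    using assms that
    by (simp add: orthogonal_comp_def orthogonal_def inner_add_left inner_commute[of z])
  have "norm y \<le> norm x"
    using assms norm_le_norm_add_orthogonal[of z y]
    by (simp add: orthogonal_comp_def orthogonal_commute add.commute)
  then have ratio: "0 \<le> norm y / norm x" "norm y / norm x \<le> 1"
    using assms by auto
  show ?thesis
  proof (cases "S \<subseteq> {0}")
    case True
    then show ?thesis using assms by (auto simp: angle_vec_sub_def)
  next
    case False
    then obtain u0 where u0: "u0 \<in> S - {0}" by auto
    define m where "m = (if y = 0 then u0 else y)"
    have m: "m \<in> S - {0}" using u0 assms by (auto simp: m_def)
    have "vec_angle x m = arccos (norm y / norm x)"
      using inner_x[of m] m
      by (auto simp: m_def vec_angle_def power2_norm_eq_inner[symmetric] power2_eq_square)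
    moreover have "arccos (norm y / norm x) \<le> vec_angle x u" if "u \<in> S - {0}" for u
    proof -
      have "x \<bullet> u \<le> norm y * norm u"
        using inner_x that norm_cauchy_schwarz by force
      then have "x \<bullet> u / (norm x * norm u) \<le> norm y / norm x"
        using assms that by (simp add: divide_simps mult.commute)
      moreover have "-1 \<le> x \<bullet> u / (norm x * norm u)"
        using Cauchy_Schwarz_ineq2[of x u] assms that
        by (simp add: abs_le_iff divide_simps)
      ultimately show ?thesis
        unfolding vec_angle_def using ratio by (intro arccos_le_arccos) auto
    qed
    ultimately have "(INF u\<in>S - {0}. vec_angle x u) = arccos (norm y / norm x)"
      using m by (intro cInf_eq_minimum) (auto intro: rev_image_eqI)
    then show ?thesis using False by (simp add: angle_vec_sub_def)
  qed
qed

lemma sin_angle_vec_sub: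
  fixes x y z :: "'a::euclidean_space"
  assumes "x \<noteq> 0" "y \<in> S" "z \<in> S\<^sup>\<bottom>" "x = y + z"
  shows "sin (angle_vec_sub x S) = norm z / norm x"
proof -
  have pythagoras: "(norm x)\<^sup>2 = (norm y)\<^sup>2 + (norm z)\<^sup>2"
    using assms by (simp add: norm_add_Pythagorean orthogonal_comp_def)
  have "1 - (norm y / norm x)\<^sup>2 = ((norm x)\<^sup>2 - (norm y)\<^sup>2) / (norm x)\<^sup>2"
    using assms(1) by (simp add: power_divide field_simps)
  also have "\<dots> = (norm z / norm x)\<^sup>2"
    using pythagoras by (simp add: power_divide)
  finally have "1 - (norm y / norm x)\<^sup>2 = (norm z / norm x)\<^sup>2" .
  moreover have "\<bar>norm y / norm x\<bar> \<le> 1"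
    using assms norm_le_norm_add_orthogonal[of z y]
    by (simp add: orthogonal_comp_def orthogonal_commute add.commute)
  ultimately show ?thesis
    using angle_vec_sub_eq_arccos[OF assms] by (simp add: sin_arccos_abs)
qed

lemma angle_vec_sub_bounds:
  fixes x :: "'a::euclidean_space"
  assumes "subspace S" "x \<noteq> 0"
  shows "0 \<le> angle_vec_sub x S" "angle_vec_sub x S \<le> pi / 2"
proof -
  obtain y z where yz: "y \<in> S" "z \<in> S\<^sup>\<bottom>" "x = y + z"
    using subspace_sum_orthogonal_comp[OF assms(1)] set_plus_elim by blast
  then have "norm y \<le> norm x"
    using norm_le_norm_add_orthogonal[of z y]
    by (simp add: orthogonal_comp_def orthogonal_commute add.commute)
  then have ratio: "0 \<le> norm y / norm x" "norm y / norm x \<le> 1"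
    using assms(2) by auto
  show "0 \<le> angle_vec_sub x S"
    unfolding angle_vec_sub_eq_arccos[OF assms(2) yz] using ratio by (intro arccos_lbound) linarith+
  show "angle_vec_sub x S \<le> pi / 2"
    unfolding angle_vec_sub_eq_arccos[OF assms(2) yz] using ratio by (intro arccos_le_pi2)
qed

lemma sin_SUP_le:
  fixes f :: "'b \<Rightarrow> real"
  assumes "A \<noteq> {}" and range: "\<And>a. a \<in> A \<Longrightarrow> 0 \<le> f a \<and> f a \<le> pi / 2"
    and le: "\<And>a. a \<in> A \<Longrightarrow> sin (f a) \<le> c"
  shows "sin (SUP a\<in>A. f a) \<le> c"
proof (cases "c \<ge> 1")
  case True
  then show ?thesis using sin_le_one order_trans by blast
next
  case False
  obtain a0 where a0: "a0 \<in> A" using assms(1) by auto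
  have "0 \<le> c" using le[OF a0] range[OF a0] sin_ge_zero[of "f a0"] by linarith
  have "f a \<le> arcsin c" if "a \<in> A" for a
  proof -
    have "f a = arcsin (sin (f a))" using range[OF that] by (simp add: arcsin_sin)
    also have "\<dots> \<le> arcsin c"
      using le[OF that] False by (intro arcsin_le_arcsin) auto
    finally show ?thesis .
  qed
  then have "(SUP a\<in>A. f a) \<le> arcsin c" by (rule cSUP_least[OF assms(1)])
  moreover have "f a0 \<le> (SUP a\<in>A. f a)"
    using range by (intro cSUP_upper[OF a0] bdd_aboveI2[where M = "pi / 2"]) auto
  moreover have "arcsin c \<le> pi / 2" using arcsin_bounded[of c] False \<open>0 \<le> c\<close> by auto
  ultimately have "sin (SUP a\<in>A. f a) \<le> sin (arcsin c)"
    using range[OF a0] by (subst sin_mono_le_eq) auto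
  then show ?thesis using False \<open>0 \<le> c\<close> by simp
qed

lemma sin_angle_sub_sub_le:
  fixes A V :: "'a::euclidean_space set"
  assumes "subspace V" "0 \<le> c" "\<And>a. a \<in> A - {0} \<Longrightarrow> sin (angle_vec_sub a V) \<le> c"
  shows "sin (angle_sub_sub A V) \<le> c"
proof (cases "A \<subseteq> {0}")
  case True
  then show ?thesis using assms(2) by (simp add: angle_sub_sub_def)
next
  case False
  then have "sin (SUP a\<in>A - {0}. angle_vec_sub a V) \<le> c"
    using assms angle_vec_sub_bounds by (intro sin_SUP_le) auto
  then show ?thesis using False by (simp add: angle_sub_sub_def)
qed

lemma norm_rejection_div_norm_le:
  fixes p q :: "'a::real_inner"
  assumes pq: "norm (rejection p q) \<le> s" and qp: "norm (rejection q p) \<le> s"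
  shows "norm (rejection p q) / norm p \<le> s / max (norm p) (norm q)"
proof (cases "p = 0")
  case True
  have "0 \<le> s" using qp norm_ge_zero order_trans by blast
  then show ?thesis using True by simp
next
  case False
  show ?thesis
  proof (cases "norm q \<le> norm p")
    case True
    then show ?thesis using pq by (simp add: divide_right_mono)
  next
    case False
    then have "norm q > 0" using \<open>p \<noteq> 0\<close> by (meson le_less_trans norm_ge_zero not_le)
    have "norm (rejection p q) / norm p = norm (rejection q p) / norm q"
      using norm_rejection_mult_norm_commute[of p q] \<open>p \<noteq> 0\<close> \<open>norm q > 0\<close>
      by (simp add: divide_simps mult.commute)
    also have "\<dots> \<le> s / norm q" using qp by (simp add: divide_right_mono)
    finally show ?thesis using False by simp
  qed
qed

(* For zw = 0 the bound is 0 / 0 = 0, which holds because then the rejection of zw is 0. *)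
lemma sin_angle_vec_sub_span_insert_le:
  fixes U :: "'a::euclidean_space set"
  assumes U: "subspace U" and yw: "yw \<in> U" and zw: "zw \<in> U\<^sup>\<bottom>"
    and yv: "yv \<in> U" and zv: "zv \<in> U\<^sup>\<bottom>"
    and a: "a \<in> span (insert (yw + zw) U)" "a \<noteq> 0"
  shows "sin (angle_vec_sub a (span (insert (yv + zv) U))) \<le> norm (rejection zw zv) / norm zw"
proof -
  define V where "V = span (insert (yv + zv) U)"
  define r where "r = rejection zw zv"
  define \<alpha> where "\<alpha> = (zw \<bullet> zv) / (zv \<bullet> zv)"
  have spanU: "span U = U" using U by simp
  obtain t where t: "a - t *\<^sub>R (yw + zw) \<in> U"
    using a by (auto simp: span_insert spanU)
  have "r \<in> U\<^sup>\<bottom>"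
    using zw zv subspace_orthogonal_comp
    unfolding r_def rejection_def by (metis subspace_diff subspace_scale)
  moreover have "orthogonal (yv + zv) r"
    using \<open>r \<in> U\<^sup>\<bottom>\<close> yv orthogonal_rejection[of zw zv]
    by (auto simp: r_def orthogonal_comp_def orthogonal_clauses orthogonal_commute)
  ultimately have "orthogonal (t *\<^sub>R r) y" if "y \<in> insert (yv + zv) U" for y
    using that by (auto simp: orthogonal_comp_def orthogonal_commute intro: orthogonal_clauses)
  then have "orthogonal (t *\<^sub>R r) x" if "x \<in> V" for x
    using that unfolding V_def by (rule orthogonal_to_span[rotated])
  then have rV: "t *\<^sub>R r \<in> V\<^sup>\<bottom>"
    by (simp add: orthogonal_comp_def orthogonal_commute)
  have "(a - t *\<^sub>R r) - (t * \<alpha>) *\<^sub>R (yv + zv)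
          = (a - t *\<^sub>R (yw + zw)) + t *\<^sub>R yw - (t * \<alpha>) *\<^sub>R yv"
    by (simp add: r_def rejection_def \<alpha>_def algebra_simps)
  also have "\<dots> \<in> U"
    using t yw yv U by (simp add: subspace_add subspace_diff subspace_scale)
  finally have aV: "a - t *\<^sub>R r \<in> V"
    unfolding V_def span_insert spanU by auto
  have sin_eq: "sin (angle_vec_sub a V) = \<bar>t\<bar> * norm r / norm a"
    using sin_angle_vec_sub[OF a(2) aV rV] by simp
  show ?thesis
  proof (cases "zw = 0")
    case True
    then show ?thesis using sin_eq by (simp add: r_def V_def)
  next
    case False
    have "a = (a - t *\<^sub>R (yw + zw) + t *\<^sub>R yw) + t *\<^sub>R zw"
      by (simp add: algebra_simps)
    moreover have "a - t *\<^sub>R (yw + zw) + t *\<^sub>R yw \<in> U"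
      using t yw U by (simp add: subspace_add subspace_scale)
    then have "orthogonal (a - t *\<^sub>R (yw + zw) + t *\<^sub>R yw) (t *\<^sub>R zw)"
      using zw by (simp add: orthogonal_comp_def orthogonal_clauses)
    ultimately have "\<bar>t\<bar> * norm zw \<le> norm a"
      using norm_le_norm_add_orthogonal by (metis norm_scaleR)
    then have "\<bar>t\<bar> * norm zw * norm r \<le> norm a * norm r"
      by (rule mult_right_mono) simp
    then have "\<bar>t\<bar> * norm r / norm a \<le> norm r / norm zw"
      using a(2) False by (simp add: divide_simps ac_simps)
    then show ?thesis
      using sin_eq by (simp add: V_def r_def)
  qed
qed

lemma sin_angle_sub_sub_span_insert_le:
  fixes U :: "'a::euclidean_space set"
  assumes "subspace U" "yw \<in> U" "zw \<in> U\<^sup>\<bottom>" "yv \<in> U" "zv \<in> U\<^sup>\<bottom>"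
  shows "sin (angle_sub_sub (span (insert (yw + zw) U)) (span (insert (yv + zv) U)))
           \<le> norm (rejection zw zv) / norm zw"
  using sin_angle_vec_sub_span_insert_le[OF assms]
  by (intro sin_angle_sub_sub_le[OF subspace_span]) auto

theorem lemma10:
  fixes w v :: "'a::euclidean_space" and U :: "'a set"
  assumes "norm w = 1" and "norm v = 1"
    and "subspace U"
    and "\<not> (w \<in> U \<and> v \<in> U)"
  shows "sin (angle_sub_sub (span (insert w U)) (span (insert v U)))
           \<le> sin (vec_angle w v) / max (sin (angle_vec_sub w U)) (sin (angle_vec_sub v U))"
proof -
  have decomp: "\<exists>y z. y \<in> U \<and> z \<in> U\<^sup>\<bottom> \<and> x = y + z" for x
    using subspace_sum_orthogonal_comp[OF assms(3)] by (metis UNIV_I set_plus_elim)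
  obtain yw zw where w: "yw \<in> U" "zw \<in> U\<^sup>\<bottom>" "w = yw + zw" using decomp by blast
  obtain yv zv where v: "yv \<in> U" "zv \<in> U\<^sup>\<bottom>" "v = yv + zv" using decomp by blast
  have w0: "w \<noteq> 0" and v0: "v \<noteq> 0" using assms(1,2) by auto
  define s where "s = sin (vec_angle w v)"
  have "norm (rejection w v) = s" "norm (rejection v w) = s"
    using norm_rejection_eq_sin_vec_angle[OF v0, of w] norm_rejection_eq_sin_vec_angle[OF w0, of v]
    by (simp_all add: s_def assms(1,2) vec_angle_commute[of v])
  moreover have "norm (rejection zw zv) \<le> norm (rejection w v)"
    unfolding w(3) v(3) by (rule norm_rejection_orthogonal_comp_le[OF w(1) v(1) w(2) v(2)])
  moreover have "norm (rejection zv zw) \<le> norm (rejection v w)"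
    unfolding w(3) v(3) by (rule norm_rejection_orthogonal_comp_le[OF v(1) w(1) v(2) w(2)])
  ultimately have "norm (rejection zw zv) / norm zw \<le> s / max (norm zw) (norm zv)"
    by (intro norm_rejection_div_norm_le) simp_all
  moreover have "sin (angle_sub_sub (span (insert w U)) (span (insert v U)))
                   \<le> norm (rejection zw zv) / norm zw"
    unfolding w(3) v(3) by (rule sin_angle_sub_sub_span_insert_le[OF assms(3) w(1,2) v(1,2)])
  moreover have "sin (angle_vec_sub w U) = norm zw" "sin (angle_vec_sub v U) = norm zv"
    using sin_angle_vec_sub[OF w0 w] sin_angle_vec_sub[OF v0 v] assms(1,2) by simp_all
  ultimately show ?thesis by (simp add: s_def)
qed

end
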